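(* Let $n_\text{S}, n_\text{R}\ge 1$ be integers and let $\gamma_\text{S}>0$ and $\lambda_1^G>0$ be real numbers. Let $Y$ be an Erlang random variable with shape and rate parameters both equal to $n_\text{S}$, i.e. with density $f_Y(y)=\frac{n_\text{S}^{n_\text{S}}}{(n_\text{S}-1)!}y^{n_\text{S}-1}e^{-n_\text{S}y}$ for $y>0$, and let $X_1$ be an exponential random variable with unit mean, independent of $Y$. Put $V=n_\text{R}\lambda_1^G X_1$ and $$\gamma_{\text{D}}=\gamma_\text{S}\,Y\,n_\text{R}\frac{V}{1+V}.$$ Then for every $x>0$, writing $w=\frac{x}{n_\text{R}\gamma_\text{S}}$, $$\mathbb{P}(\gamma_\text{D}\le x)=1-2(n_\text{S}w)^{n_\text{S}}e^{-n_\text{S}w}\sum_{m=0}^{n_\text{S}-1}\frac{(\lambda_1^G n_\text{S}n_\text{R}w)^{-(m+1)/2}}{m!\,(n_\text{S}-m-1)!}\,\mathrm{K}_{m+1}\!\left(2\sqrt{\frac{n_\text{S}w}{\lambda_1^G n_\text{R}}}\right),$$ where $\mathrm{K}_\nu$ denotes the modified Bessel function of the second kind of order $\nu$.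
   Context: This is the distribution of the received SNR $\gamma_\text{D}$ at the single-antenna destination of a dual-hop amplify-and-forward relay system (source with $n_\text{S}$ antennas, relay with $n_\text{R}$ antennas, Rayleigh fading) when the relay antennas are fully correlated (correlation matrix equal to the all-ones $n_\text{R}\times n_\text{R}$ matrix, so its only nonzero eigenvalue is $n_\text{R}$); $\gamma_\text{S}$ is the source transmit SNR and $\lambda_1^G$ is the relay gain allocated to the single nonzero eigenmode. The claim as stated is purely about the random variables defined in it. *)

theory Defs
  imports "HOL-Probability.Probability"
begin

text \<open>Modified Bessel function of the second kind of order nu, for real argument z > 0,
  via the standard integral representation (DLMF 10.32.9):
  K_nu(z) = integral over t in [0, infinity) of exp(-z cosh t) cosh(nu t).\<close>
definition besselK :: "real \<Rightarrow> real \<Rightarrow> real" where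
  "besselK nu z = (LBINT t:{0..}. exp (- z * cosh t) * cosh (nu * t))"

end

theory Submission
  imports Defs
begin

text \<open>
  With w = x / (nR \<gamma>S) and c = nR \<lambda>, for X1 > 0 the event \<gamma>D > x is
  {Y > w \<and> X1 > (w / c) / (Y - w)}, so conditioning on Y gives
  P(\<gamma>D > x) = \<integral>_{y > w} f_Y(y) exp (-(w / c) / (y - w)) dy.
  Shifting y = w + u and expanding (w + u)^(nS - 1) binomially leaves the integrals
  \<integral>_0^\<infinity> u^j exp (-p u - a / u) du. The substitution u = sqrt (a / p) e^s turns
  p u + a / u into 2 sqrt (a p) cosh s, so each of them equals
  2 (a / p)^((j + 1) / 2) K_(j+1) (2 sqrt (a p)).
\<close>

lemma nn_integral_exp_substitution:
  fixes f :: "real \<Rightarrow> ennreal"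
  assumes [measurable]: "f \<in> borel_measurable borel"
  shows "(\<integral>\<^sup>+t. f t * indicator {0<..} t \<partial>lborel) = (\<integral>\<^sup>+s. f (exp s) * ennreal (exp s) \<partial>lborel)"
proof -
  define r where "r i = real i + 1" for i :: nat
  let ?F = "density lborel f" and ?G = "density lborel (\<lambda>s. f (exp s) * ennreal (exp s))"
  have "emeasure ?F {exp (- r i)..exp (r i)} = emeasure ?G {- r i..r i}" for i
  proof -
    have "(\<integral>\<^sup>+t. f t * indicator {exp (- r i)..exp (r i)} t \<partial>lborel)
        = (\<integral>\<^sup>+s. f (exp s) * ennreal (exp s) * indicator {- r i..r i} s \<partial>lborel)"
      by (rule nn_integral_substitution_aux)
        (auto simp: r_def intro: DERIV_exp continuous_on_exp[OF continuous_on_id])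
    then show ?thesis
      by (simp add: emeasure_density)
  qed
  moreover have "incseq (\<lambda>i. {exp (- r i)..exp (r i)})" "incseq (\<lambda>i. {- r i..r i})"
    by (auto simp: incseq_def r_def)
  moreover have "(\<Union>i. {exp (- r i)..exp (r i)}) = {0<..}"
  proof (intro equalityI subsetI)
    fix t :: real assume "t \<in> {0<..}"
    then have t: "exp (ln t) = t" by simp
    obtain n :: nat where "\<bar>ln t\<bar> \<le> real n" using real_arch_simple by blast
    then have "exp (- r n) \<le> exp (ln t) \<and> exp (ln t) \<le> exp (r n)"
      by (simp add: r_def abs_le_iff)
    then show "t \<in> (\<Union>i. {exp (- r i)..exp (r i)})"
      unfolding t by auto
  qed (auto intro: less_le_trans[OF exp_gt_zero])
  moreover have "(\<Union>i. {- r i..r i}) = UNIV"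
  proof (intro equalityI subsetI)
    fix s :: real
    obtain n :: nat where "\<bar>s\<bar> \<le> real n" using real_arch_simple by blast
    then show "s \<in> (\<Union>i. {- r i..r i})"
      by (auto simp: r_def intro!: exI[of _ n])
  qed auto
  ultimately have "emeasure ?F {0<..} = emeasure ?G UNIV"
    using SUP_emeasure_incseq[of "\<lambda>i. {exp (- r i)..exp (r i)}" ?F]
      SUP_emeasure_incseq[of "\<lambda>i. {- r i..r i}" ?G]
    by (simp add: image_subset_iff)
  then show ?thesis
    by (simp add: emeasure_density)
qed

lemma nn_integral_reflect_split:
  fixes h :: "real \<Rightarrow> ennreal"
  assumes [measurable]: "h \<in> borel_measurable borel"
  shows "(\<integral>\<^sup>+u. h u \<partial>lborel) = (\<integral>\<^sup>+u. (h u + h (- u)) * indicator {0..} u \<partial>lborel)"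
proof -
  have "(\<integral>\<^sup>+u. h u \<partial>lborel) = (\<integral>\<^sup>+u. h u * indicator {0..} u + h u * indicator {..<0} u \<partial>lborel)"
    by (intro nn_integral_cong) (auto simp: indicator_def)
  also have "\<dots> = (\<integral>\<^sup>+u. h u * indicator {0..} u \<partial>lborel) + (\<integral>\<^sup>+u. h u * indicator {..<0} u \<partial>lborel)"
    by (intro nn_integral_add) auto
  also have "(\<integral>\<^sup>+u. h u * indicator {..<0} u \<partial>lborel) = (\<integral>\<^sup>+u. h (- u) * indicator {0<..} u \<partial>lborel)"
    using nn_integral_real_affine[where c="-1" and t=0 and f="\<lambda>u. h u * indicator {..<0} u"]
    by (simp add: indicator_def)
  also have "\<dots> = (\<integral>\<^sup>+u. h (- u) * indicator {0..} u \<partial>lborel)"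
    by (intro nn_integral_cong_AE) (use AE_lborel_singleton[of 0] in \<open>auto simp: indicator_def\<close>)
  also have "(\<integral>\<^sup>+u. h u * indicator {0..} u \<partial>lborel) + \<dots> = (\<integral>\<^sup>+u. (h u + h (- u)) * indicator {0..} u \<partial>lborel)"
    by (subst nn_integral_add[symmetric]) (auto simp: distrib_right)
  finally show ?thesis .
qed

lemma borel_measurable_cosh [measurable]: "(cosh :: real \<Rightarrow> real) \<in> borel_measurable borel"
  by (intro borel_measurable_continuous_onI continuous_intros)

lemma nn_integral_exp_cosh_even:
  fixes \<nu> z :: real
  shows "(\<integral>\<^sup>+s. ennreal (exp (\<nu> * s) * exp (- z * cosh s)) \<partial>lborel)
       = 2 * (\<integral>\<^sup>+s. ennreal (exp (- z * cosh s) * cosh (\<nu> * s)) * indicator {0..} s \<partial>lborel)"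
proof -
  define h where "h s = exp (\<nu> * s) * exp (- z * cosh s)" for s
  have even: "ennreal (h s) + ennreal (h (- s)) = 2 * ennreal (exp (- z * cosh s) * cosh (\<nu> * s))" for s
  proof -
    have "ennreal (h s) + ennreal (h (- s)) = ennreal (h s + h (- s))"
      by (rule ennreal_plus[symmetric]) (simp_all add: h_def)
    also have "h s + h (- s) = 2 * (exp (- z * cosh s) * cosh (\<nu> * s))"
      unfolding h_def cosh_def by (simp add: algebra_simps)
    finally show ?thesis
      by (simp only: ennreal_mult' zero_le_numeral ennreal_numeral)
  qed
  have "(\<integral>\<^sup>+s. ennreal (h s) \<partial>lborel) = (\<integral>\<^sup>+s. (ennreal (h s) + ennreal (h (- s))) * indicator {0..} s \<partial>lborel)"
    by (rule nn_integral_reflect_split) (simp add: h_def)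
  also have "\<dots> = (\<integral>\<^sup>+s. 2 * (ennreal (exp (- z * cosh s) * cosh (\<nu> * s)) * indicator {0..} s) \<partial>lborel)"
    by (simp only: even mult.assoc)
  also have "\<dots> = 2 * (\<integral>\<^sup>+s. ennreal (exp (- z * cosh s) * cosh (\<nu> * s)) * indicator {0..} s \<partial>lborel)"
    by (rule nn_integral_cmult) simp
  finally show ?thesis
    by (simp only: h_def)
qed

lemma power_exp_inverse_at_scaled_exp:
  fixes k :: nat and p a s :: real
  assumes p: "p > 0" and a: "a > 0"
  defines "q \<equiv> sqrt (a / p)"
  shows "(q * exp s) ^ k * exp (- p * (q * exp s) - a / (q * exp s)) * (q * exp s)
       = q ^ (k + 1) * (exp ((real k + 1) * s) * exp (- (2 * sqrt (a * p)) * cosh s))"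
proof -
  have "sqrt a * sqrt a = a" "sqrt p * sqrt p = p"
    using a p by simp_all
  then have pq: "p * q = sqrt (a * p)" and aq: "a / q = sqrt (a * p)"
    using a p by (simp_all add: q_def real_sqrt_divide real_sqrt_mult field_simps)
  have "p * (q * exp s) + a / (q * exp s) = (p * q) * exp s + (a / q) * exp (- s)"
    by (simp add: exp_minus field_simps)
  then have "- p * (q * exp s) - a / (q * exp s) = - (2 * sqrt (a * p)) * cosh s"
    unfolding pq aq cosh_def by (simp add: algebra_simps)
  moreover have "exp ((real k + 1) * s) = exp s ^ (k + 1)"
    by (simp add: distrib_right exp_add flip: exp_of_nat_mult)
  ultimately show ?thesis
    by (simp add: power_mult_distrib)
qed

lemma nn_integral_power_exp_cosh:
  fixes k :: nat and p a :: real
  assumes p: "p > 0" and a: "a > 0"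
  shows "(\<integral>\<^sup>+u. ennreal (u ^ k * exp (- p * u - a / u)) * indicator {0<..} u \<partial>lborel)
       = ennreal (2 * sqrt (a / p) ^ (k + 1))
           * (\<integral>\<^sup>+s. ennreal (exp (- (2 * sqrt (a * p)) * cosh s) * cosh ((real k + 1) * s)) * indicator {0..} s \<partial>lborel)"
proof -
  define q where "q = sqrt (a / p)"
  define h where "h s = exp ((real k + 1) * s) * exp (- (2 * sqrt (a * p)) * cosh s)" for s
  have q: "q > 0"
    using a p by (simp add: q_def)
  have "(\<integral>\<^sup>+u. ennreal (u ^ k * exp (- p * u - a / u)) * indicator {0<..} u \<partial>lborel)
      = (\<integral>\<^sup>+s. ennreal (exp s ^ k * exp (- p * exp s - a / exp s)) * ennreal (exp s) \<partial>lborel)"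
    by (rule nn_integral_exp_substitution) measurable
  also have "\<dots> = (\<integral>\<^sup>+s. ennreal ((q * exp s) ^ k * exp (- p * (q * exp s) - a / (q * exp s))) * ennreal (q * exp s) \<partial>lborel)"
    using nn_integral_real_affine[where c=1 and t="ln q"
        and f="\<lambda>s. ennreal (exp s ^ k * exp (- p * exp s - a / exp s)) * ennreal (exp s)"] q
    by (simp add: exp_add)
  also have "\<dots> = (\<integral>\<^sup>+s. ennreal (q ^ (k + 1)) * ennreal (h s) \<partial>lborel)"
  proof (intro nn_integral_cong)
    fix s :: real
    show "ennreal ((q * exp s) ^ k * exp (- p * (q * exp s) - a / (q * exp s))) * ennreal (q * exp s)
        = ennreal (q ^ (k + 1)) * ennreal (h s)"
      using power_exp_inverse_at_scaled_exp[OF p a, where k=k and s=s] q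
      by (simp add: q_def h_def ennreal_mult'' [symmetric] ennreal_mult[symmetric])
  qed
  also have "\<dots> = ennreal (q ^ (k + 1)) * (\<integral>\<^sup>+s. ennreal (h s) \<partial>lborel)"
    by (rule nn_integral_cmult) (simp add: h_def)
  also have "(\<integral>\<^sup>+s. ennreal (h s) \<partial>lborel)
      = 2 * (\<integral>\<^sup>+s. ennreal (exp (- (2 * sqrt (a * p)) * cosh s) * cosh ((real k + 1) * s)) * indicator {0..} s \<partial>lborel)"
    unfolding h_def by (rule nn_integral_exp_cosh_even)
  finally show ?thesis
    by (simp only: q_def ennreal_mult' zero_le_numeral ennreal_numeral mult_ac)
qed

text \<open>The hypothesis matters: besselK is a Lebesgue integral and thus 0 when the integral diverges.\<close>

lemma nn_integral_besselK:
  assumes "(\<integral>\<^sup>+t. ennreal (exp (- z * cosh t) * cosh (\<nu> * t)) * indicator {0..} t \<partial>lborel) < \<infinity>"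
  shows "(\<integral>\<^sup>+t. ennreal (exp (- z * cosh t) * cosh (\<nu> * t)) * indicator {0..} t \<partial>lborel) = ennreal (besselK \<nu> z)"
proof -
  have cosh_pos: "0 < cosh x" for x :: real
    by (simp add: cosh_def add_pos_pos)
  have "besselK \<nu> z = enn2real (\<integral>\<^sup>+t. ennreal (indicator {0..} t * (exp (- z * cosh t) * cosh (\<nu> * t))) \<partial>lborel)"
    unfolding besselK_def set_lebesgue_integral_def real_scaleR_def
    by (rule integral_eq_nn_integral) (auto intro!: less_imp_le[OF cosh_pos])
  also have "(\<integral>\<^sup>+t. ennreal (indicator {0..} t * (exp (- z * cosh t) * cosh (\<nu> * t))) \<partial>lborel)
      = (\<integral>\<^sup>+t. ennreal (exp (- z * cosh t) * cosh (\<nu> * t)) * indicator {0..} t \<partial>lborel)"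
    by (intro nn_integral_cong) (simp add: indicator_def)
  finally show ?thesis
    using assms by simp
qed

lemma besselK_nonneg: "0 \<le> besselK \<nu> z"
  unfolding besselK_def set_lebesgue_integral_def real_scaleR_def
  by (intro integral_nonneg_AE AE_I2) (simp add: cosh_def add_pos_pos less_imp_le)

lemma nn_integral_power_exp_inverse_finite:
  fixes k :: nat and p a :: real
  assumes p: "p > 0" and a: "a > 0"
  shows "(\<integral>\<^sup>+u. ennreal (u ^ k * exp (- p * u - a / u)) * indicator {0<..} u \<partial>lborel) < \<infinity>"
proof -
  have "(\<integral>\<^sup>+u. ennreal (u ^ k * exp (- p * u - a / u)) * indicator {0<..} u \<partial>lborel)
      \<le> (\<integral>\<^sup>+u. ennreal (1 / p) * ennreal (erlang_density 0 p u * u ^ k) \<partial>lborel)"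
  proof (intro nn_integral_mono)
    fix u :: real
    have "u ^ k * exp (- p * u - a / u) \<le> 1 / p * (erlang_density 0 p u * u ^ k)" if "u > 0"
      using that p a by (simp add: erlang_density_def field_simps mult_left_mono)
    then show "ennreal (u ^ k * exp (- p * u - a / u)) * indicator {0<..} u
        \<le> ennreal (1 / p) * ennreal (erlang_density 0 p u * u ^ k)"
      using p by (auto simp: indicator_def ennreal_mult[symmetric] erlang_density_def intro: ennreal_leI)
  qed
  also have "\<dots> = ennreal (1 / p) * (fact k / (fact 0 * p ^ k))"
    using p by (simp add: nn_integral_cmult nn_integral_erlang_ith_moment)
  also have "\<dots> < \<infinity>"
    using p by (simp add: ennreal_mult_less_top)
  finally show ?thesis .
qed

lemma nn_integral_power_exp_inverse:
  fixes k :: nat and p a :: real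
  assumes p: "p > 0" and a: "a > 0"
  shows "(\<integral>\<^sup>+u. ennreal (u ^ k * exp (- p * u - a / u)) * indicator {0<..} u \<partial>lborel)
       = ennreal (2 * sqrt (a / p) ^ (k + 1) * besselK (real k + 1) (2 * sqrt (a * p)))"
proof -
  let ?K = "\<integral>\<^sup>+s. ennreal (exp (- (2 * sqrt (a * p)) * cosh s) * cosh ((real k + 1) * s)) * indicator {0..} s \<partial>lborel"
  have eq: "(\<integral>\<^sup>+u. ennreal (u ^ k * exp (- p * u - a / u)) * indicator {0<..} u \<partial>lborel)
      = ennreal (2 * sqrt (a / p) ^ (k + 1)) * ?K"
    by (rule nn_integral_power_exp_cosh[OF p a])
  then have fin: "?K < \<infinity>"
    using nn_integral_power_exp_inverse_finite[OF p a, of k] p a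
    by (auto simp: ennreal_mult_less_top top.not_eq_extremum)
  show ?thesis
    unfolding eq nn_integral_besselK[OF fin]
    by (rule ennreal_mult'[symmetric]) (use p a in simp)
qed

lemma erlang_density_shift_expansion:
  fixes n :: nat and l w u a :: real
  assumes "n \<ge> 1"
  shows "l ^ n / fact (n - 1) * (w + u) ^ (n - 1) * exp (- l * (w + u)) * exp (- a / u)
       = (\<Sum>j<n. l ^ n / fact (n - 1) * real (n - 1 choose j) * w ^ (n - 1 - j) * exp (- l * w)
                  * (u ^ j * exp (- l * u - a / u)))"
proof -
  define e where "e = exp (- l * u - a / u)"
  have "(w + u) ^ (n - 1) = (\<Sum>j<n. real (n - 1 choose j) * u ^ j * w ^ (n - 1 - j))"
    using assms by (simp add: binomial_ring[of u w] add.commute lessThan_Suc_atMost[symmetric])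
  moreover have "exp (- l * (w + u)) * exp (- a / u) = exp (- l * w) * e"
    by (simp add: e_def algebra_simps flip: exp_add)
  ultimately have "l ^ n / fact (n - 1) * (w + u) ^ (n - 1) * exp (- l * (w + u)) * exp (- a / u)
      = l ^ n / fact (n - 1) * (\<Sum>j<n. real (n - 1 choose j) * u ^ j * w ^ (n - 1 - j)) * (exp (- l * w) * e)"
    by (simp only: mult.assoc)
  also have "\<dots> = (\<Sum>j<n. l ^ n / fact (n - 1) * real (n - 1 choose j) * w ^ (n - 1 - j) * exp (- l * w) * (u ^ j * e))"
    by (simp add: sum_distrib_left sum_distrib_right mult_ac)
  finally show ?thesis
    by (simp only: e_def)
qed

lemma nn_integral_erlang_exp_inverse_shift:
  fixes n :: nat and l w a :: real
  assumes n: "n \<ge> 1" and l: "l > 0" and w: "w \<ge> 0" and a: "a > 0"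
  shows "(\<integral>\<^sup>+y. ennreal (if y > 0 then l ^ n / fact (n - 1) * y ^ (n - 1) * exp (- l * y) else 0)
                * ennreal (if w < y then exp (- a / (y - w)) else 0) \<partial>lborel)
       = ennreal (\<Sum>j<n. l ^ n / fact (n - 1) * real (n - 1 choose j) * w ^ (n - 1 - j) * exp (- l * w)
                        * (2 * sqrt (a / l) ^ (j + 1) * besselK (real j + 1) (2 * sqrt (a * l))))"
proof -
  define D where "D j = l ^ n / fact (n - 1) * real (n - 1 choose j) * w ^ (n - 1 - j) * exp (- l * w)" for j
  define F where "F y = ennreal (if y > 0 then l ^ n / fact (n - 1) * y ^ (n - 1) * exp (- l * y) else 0)
                * ennreal (if w < y then exp (- a / (y - w)) else 0)" for y
  have [measurable]: "F \<in> borel_measurable borel"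
    unfolding F_def by measurable
  have D: "0 \<le> D j" for j
    using l w by (simp add: D_def)
  have expand: "F (w + u) = (\<Sum>j<n. ennreal (D j) * (ennreal (u ^ j * exp (- l * u - a / u)) * indicator {0<..} u))" for u
  proof (cases "u > 0")
    case True
    have "l ^ n / fact (n - 1) * (w + u) ^ (n - 1) * exp (- l * (w + u)) * exp (- a / u)
        = (\<Sum>j<n. D j * (u ^ j * exp (- l * u - a / u)))"
      unfolding D_def by (rule erlang_density_shift_expansion[OF n])
    then show ?thesis
      using True w D by (simp add: F_def sum_nonneg flip: ennreal_mult'')
  qed (simp add: F_def)
  have "(\<integral>\<^sup>+y. F y \<partial>lborel) = (\<integral>\<^sup>+u. F (w + u) \<partial>lborel)"
    using nn_integral_real_affine[where c=1 and t=w and f=F] by simp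
  also have "\<dots> = (\<Sum>j<n. ennreal (D j) * (\<integral>\<^sup>+u. ennreal (u ^ j * exp (- l * u - a / u)) * indicator {0<..} u \<partial>lborel))"
    unfolding expand by (simp add: nn_integral_sum nn_integral_cmult)
  also have "\<dots> = (\<Sum>j<n. ennreal (D j) * ennreal (2 * sqrt (a / l) ^ (j + 1) * besselK (real j + 1) (2 * sqrt (a * l))))"
    by (simp only: nn_integral_power_exp_inverse[OF l a])
  also have "\<dots> = ennreal (\<Sum>j<n. D j * (2 * sqrt (a / l) ^ (j + 1) * besselK (real j + 1) (2 * sqrt (a * l))))"
    using l a D by (simp add: besselK_nonneg flip: ennreal_mult)
  finally show ?thesis
    by (simp add: F_def D_def)
qed

lemma nn_integral_exponential_tail:
  fixes T :: real
  assumes "T \<ge> 0"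
  shows "(\<integral>\<^sup>+t. ennreal (if t > 0 then exp (- t) else 0) * indicator {T<..} t \<partial>lborel) = ennreal (exp (- T))"
proof -
  have "((\<lambda>t. - exp (- t)) \<longlongrightarrow> (0::real)) at_top"
    using tendsto_minus[OF filterlim_compose[OF exp_at_bot filterlim_uminus_at_bot_at_top]] by simp
  have "(\<integral>\<^sup>+t. ennreal (if t > 0 then exp (- t) else 0) * indicator {T<..} t \<partial>lborel)
      = (\<integral>\<^sup>+t. ennreal (exp (- t)) * indicator {T..} t \<partial>lborel)"
    by (intro nn_integral_cong_AE) (use AE_lborel_singleton[of T] assms in \<open>auto simp: indicator_def\<close>)
  also have "\<dots> = ennreal (0 - (- exp (- T)))"
    by (rule nn_integral_FTC_atLeast[where F="\<lambda>t. - exp (- t)"])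
      (auto intro!: derivative_eq_intros simp: \<open>((\<lambda>t. - exp (- t)) \<longlongrightarrow> 0) at_top\<close>)
  finally show ?thesis
    by simp
qed

lemma less_mult_saturation_iff:
  fixes w y c t :: real
  assumes "w > 0" "c > 0" "t > 0"
  shows "w < y * (c * t / (1 + c * t)) \<longleftrightarrow> w < y \<and> w / (c * (y - w)) < t"
proof -
  have "w < y * (c * t / (1 + c * t)) \<longleftrightarrow> w < (y - w) * (c * t)"
    using assms by (simp add: field_simps add_pos_pos)
  also have "\<dots> \<longleftrightarrow> w < y \<and> w / (c * (y - w)) < t"
  proof (cases "w < y")
    case True
    then show ?thesis
      using assms by (simp add: pos_divide_less_eq mult_ac)
  next
    case False
    then have "(y - w) * (c * t) \<le> 0"
      using assms by (simp add: mult_nonpos_nonneg)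
    then show ?thesis
      using assms False by simp
  qed
  finally show ?thesis .
qed

lemma nn_integral_exponential_saturation:
  fixes w c y :: real
  assumes w: "w > 0" and c: "c > 0"
  shows "(\<integral>\<^sup>+t. ennreal (if t > 0 then exp (- t) else 0) * indicator {t. w < y * (c * t / (1 + c * t))} t \<partial>lborel)
       = ennreal (if w < y then exp (- (w / c) / (y - w)) else 0)"
proof (cases "w < y")
  case True
  have "ennreal (if t > 0 then exp (- t) else 0) * indicator {t. w < y * (c * t / (1 + c * t))} t
      = ennreal (if t > 0 then exp (- t) else 0) * indicator {w / (c * (y - w))<..} t" for t
    using less_mult_saturation_iff[OF w c, of t y] True by (cases "t > 0") (auto simp: indicator_def)
  then show ?thesis
    using True w c by (simp add: nn_integral_exponential_tail)
next
  case False
  have "ennreal (if t > 0 then exp (- t) else 0) * indicator {t. w < y * (c * t / (1 + c * t))} t = 0" for t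
    using less_mult_saturation_iff[OF w c, of t y] False by (cases "t > 0") (auto simp: indicator_def)
  then show ?thesis
    using False by (simp only: nn_integral_const mult_zero_left if_False ennreal_0)
qed

lemma (in prob_space) emeasure_indep_pair_density:
  fixes Y X :: "'a \<Rightarrow> real"
  assumes Y: "distributed M lborel Y f" and X: "distributed M lborel X g"
    and indep: "indep_var borel Y borel X" and B[measurable]: "B \<in> sets (lborel \<Otimes>\<^sub>M lborel)"
  shows "emeasure M {\<omega> \<in> space M. (Y \<omega>, X \<omega>) \<in> B}
       = (\<integral>\<^sup>+y. f y * (\<integral>\<^sup>+t. g t * indicator B (y, t) \<partial>lborel) \<partial>lborel)"
proof -
  have [measurable]: "f \<in> borel_measurable borel" "g \<in> borel_measurable borel"
    using distributed_borel_measurable[OF Y] distributed_borel_measurable[OF X] by simp_all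
  have "indep_var lborel Y lborel X"
    using indep unfolding indep_var_def indep_vars_def
    by (simp add: case_bool_if)
  then have "distributed M (lborel \<Otimes>\<^sub>M lborel) (\<lambda>\<omega>. (Y \<omega>, X \<omega>)) (\<lambda>(y, t). f y * g t)"
    using Y X by (intro distributed_joint_indep) (simp_all add: lborel.sigma_finite_measure_axioms)
  from distributed_emeasure[OF this B]
  have "emeasure M {\<omega> \<in> space M. (Y \<omega>, X \<omega>) \<in> B}
      = (\<integral>\<^sup>+p. (\<lambda>(y, t). f y * g t) p * indicator B p \<partial>(lborel \<Otimes>\<^sub>M lborel))"
    by (simp add: vimage_def Int_def conj_commute)
  also have "\<dots> = (\<integral>\<^sup>+y. \<integral>\<^sup>+t. f y * (g t * indicator B (y, t)) \<partial>lborel \<partial>lborel)"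
    using B by (subst lborel.nn_integral_fst[symmetric]) (simp_all add: mult.assoc)
  also have "\<dots> = (\<integral>\<^sup>+y. f y * (\<integral>\<^sup>+t. g t * indicator B (y, t) \<partial>lborel) \<partial>lborel)"
    by (intro nn_integral_cong nn_integral_cmult) measurable
  finally show ?thesis .
qed

lemma (in prob_space) emeasure_erlang_mult_saturation_greater:
  fixes Y X :: "'a \<Rightarrow> real" and n :: nat and l c w :: real
  assumes n: "n \<ge> 1" and l: "l > 0" and c: "c > 0" and w: "w > 0"
    and Y: "distributed M lborel Y
      (\<lambda>y. ennreal (if y > 0 then l ^ n / fact (n - 1) * y ^ (n - 1) * exp (- l * y) else 0))"
    and X: "distributed M lborel X (\<lambda>t. ennreal (if t > 0 then exp (- t) else 0))"
    and indep: "indep_var borel Y borel X"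
  shows "emeasure M {\<omega> \<in> space M. w < Y \<omega> * (c * X \<omega> / (1 + c * X \<omega>))}
       = ennreal (\<Sum>j<n. l ^ n / fact (n - 1) * real (n - 1 choose j) * w ^ (n - 1 - j) * exp (- l * w)
                        * (2 * sqrt (w / c / l) ^ (j + 1) * besselK (real j + 1) (2 * sqrt (w / c * l))))"
proof -
  define B where "B = {p :: real \<times> real. w < fst p * (c * snd p / (1 + c * snd p))}"
  have "B = {p \<in> space (lborel \<Otimes>\<^sub>M lborel). w < fst p * (c * snd p / (1 + c * snd p))}"
    by (auto simp: B_def space_pair_measure)
  also have "\<dots> \<in> sets (lborel \<Otimes>\<^sub>M lborel)"
    by measurable
  finally have B_sets: "B \<in> sets (lborel \<Otimes>\<^sub>M lborel)" .
  have B_section: "indicator B (y, t) = indicator {t. w < y * (c * t / (1 + c * t))} t" for y t :: real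
    by (simp add: B_def indicator_def)
  have "emeasure M {\<omega> \<in> space M. w < Y \<omega> * (c * X \<omega> / (1 + c * X \<omega>))}
      = emeasure M {\<omega> \<in> space M. (Y \<omega>, X \<omega>) \<in> B}"
    by (simp add: B_def)
  also have "\<dots> = (\<integral>\<^sup>+y. ennreal (if y > 0 then l ^ n / fact (n - 1) * y ^ (n - 1) * exp (- l * y) else 0)
      * ennreal (if w < y then exp (- (w / c) / (y - w)) else 0) \<partial>lborel)"
    unfolding emeasure_indep_pair_density[OF Y X indep B_sets] B_section
      nn_integral_exponential_saturation[OF w c] ..
  also have "\<dots> = ennreal (\<Sum>j<n. l ^ n / fact (n - 1) * real (n - 1 choose j) * w ^ (n - 1 - j) * exp (- l * w)
                        * (2 * sqrt (w / c / l) ^ (j + 1) * besselK (real j + 1) (2 * sqrt (w / c * l))))"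
    by (rule nn_integral_erlang_exp_inverse_shift) (use n l c w in simp_all)
  finally show ?thesis .
qed

lemma powr_neg_half_eq:
  fixes x :: real and j :: nat
  assumes "x > 0"
  shows "x powr (- (real j + 1) / 2) = 1 / sqrt x ^ (j + 1)"
proof -
  have "sqrt x ^ (j + 1) = sqrt x powr real (j + 1)"
    by (rule powr_realpow[symmetric]) (use assms in simp)
  also have "\<dots> = (x powr (1 / 2)) powr real (j + 1)"
    using assms by (simp add: powr_half_sqrt)
  also have "\<dots> = x powr ((real j + 1) / 2)"
    by (simp add: powr_powr add.commute)
  finally show ?thesis
    by (simp only: minus_divide_left[symmetric] powr_minus_divide)
qed

lemma binomial_bessel_coefficient_eq:
  fixes n j :: nat and l c w :: real
  assumes j: "j < n" and l: "l > 0" and c: "c > 0" and w: "w > 0"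
  shows "l ^ n / fact (n - 1) * real (n - 1 choose j) * w ^ (n - 1 - j) * exp (- l * w)
           * (2 * sqrt (w / c / l) ^ (j + 1))
       = 2 * (l * w) ^ n * exp (- l * w) * ((c * l * w) powr (- (real j + 1) / 2) / (fact j * fact (n - j - 1)))"
proof -
  define s where "s = sqrt (w / c / l)"
  define t where "t = sqrt (c * l * w)"
  have t: "t > 0"
    using l c w by (simp add: t_def)
  have "w / c / l * (c * l * w) = w\<^sup>2"
    using l c by (simp add: field_simps power2_eq_square)
  then have st: "s * t = w"
    using w by (simp add: s_def t_def flip: real_sqrt_mult)
  have "n = (n - 1 - j) + (j + 1)"
    using j by simp
  then have "w ^ n = w ^ (n - 1 - j) * w ^ (j + 1)"
    by (metis power_add)
  then have "w ^ n = w ^ (n - 1 - j) * (s ^ (j + 1) * t ^ (j + 1))"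
    by (simp only: st[symmetric] power_mult_distrib)
  moreover have "real (n - 1 choose j) = fact (n - 1) / (fact j * fact (n - 1 - j))"
    using j by (simp add: binomial_fact)
  moreover have "(c * l * w) powr (- (real j + 1) / 2) = 1 / t ^ (j + 1)"
    unfolding t_def by (rule powr_neg_half_eq) (use l c w in simp)
  moreover have "n - j - 1 = n - 1 - j"
    by simp
  ultimately show ?thesis
    using t by (simp add: s_def power_mult_distrib field_simps)
qed

lemma erlang_bessel_sum_eq:
  fixes n :: nat and l c w :: real and K :: "nat \<Rightarrow> real"
  assumes l: "l > 0" and c: "c > 0" and w: "w > 0"
  shows "(\<Sum>j<n. l ^ n / fact (n - 1) * real (n - 1 choose j) * w ^ (n - 1 - j) * exp (- l * w)
            * (2 * sqrt (w / c / l) ^ (j + 1) * K j))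
       = 2 * (l * w) ^ n * exp (- l * w)
           * (\<Sum>j<n. (c * l * w) powr (- (real j + 1) / 2) / (fact j * fact (n - j - 1)) * K j)"
proof -
  have "(\<Sum>j<n. l ^ n / fact (n - 1) * real (n - 1 choose j) * w ^ (n - 1 - j) * exp (- l * w)
            * (2 * sqrt (w / c / l) ^ (j + 1) * K j))
      = (\<Sum>j<n. (2 * (l * w) ^ n * exp (- l * w)
            * ((c * l * w) powr (- (real j + 1) / 2) / (fact j * fact (n - j - 1)))) * K j)"
  proof (rule sum.cong[OF refl])
    fix j assume "j \<in> {..<n}"
    then have "l ^ n / fact (n - 1) * real (n - 1 choose j) * w ^ (n - 1 - j) * exp (- l * w)
            * (2 * sqrt (w / c / l) ^ (j + 1)) * K j
        = 2 * (l * w) ^ n * exp (- l * w)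
            * ((c * l * w) powr (- (real j + 1) / 2) / (fact j * fact (n - j - 1))) * K j"
      using binomial_bessel_coefficient_eq[of j n l c w] l c w by simp
    then show "l ^ n / fact (n - 1) * real (n - 1 choose j) * w ^ (n - 1 - j) * exp (- l * w)
            * (2 * sqrt (w / c / l) ^ (j + 1) * K j)
        = (2 * (l * w) ^ n * exp (- l * w)
            * ((c * l * w) powr (- (real j + 1) / 2) / (fact j * fact (n - j - 1)))) * K j"
      by (simp only: mult.assoc)
  qed
  then show ?thesis
    by (simp only: sum_distrib_left mult.assoc)
qed

lemma (in prob_space) prob_relay_snr_greater:
  fixes Y X1 :: "'a \<Rightarrow> real" and nS nR :: nat and \<gamma>S lam x :: real
  assumes nS: "nS \<ge> 1" and nR: "nR \<ge> 1" and \<gamma>S: "\<gamma>S > 0" and lam: "lam > 0"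
    and Y: "distributed M lborel Y
      (\<lambda>y. ennreal (if y > 0 then real nS ^ nS / fact (nS - 1) * y ^ (nS - 1) * exp (- real nS * y) else 0))"
    and X1: "distributed M lborel X1 (\<lambda>t. ennreal (if t > 0 then exp (- t) else 0))"
    and indep: "indep_var borel Y borel X1" and x: "x > 0"
  defines "w \<equiv> x / (real nR * \<gamma>S)"
  shows "prob {\<omega> \<in> space M. x < \<gamma>S * Y \<omega> * real nR * (real nR * lam * X1 \<omega> / (1 + real nR * lam * X1 \<omega>))}
       = 2 * (real nS * w) ^ nS * exp (- real nS * w) *
         (\<Sum>m<nS. (lam * real nS * real nR * w) powr (- (real m + 1) / 2) / (fact m * fact (nS - m - 1))
                   * besselK (real m + 1) (2 * sqrt (real nS * w / (lam * real nR))))"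
proof -
  define c where "c = real nR * lam"
  define S where "S = (\<Sum>j<nS. real nS ^ nS / fact (nS - 1) * real (nS - 1 choose j) * w ^ (nS - 1 - j)
    * exp (- real nS * w) * (2 * sqrt (w / c / real nS) ^ (j + 1) * besselK (real j + 1) (2 * sqrt (w / c * real nS))))"
  have w: "w > 0" and c: "c > 0"
    using nR \<gamma>S lam x by (simp_all add: w_def c_def)
  have "{\<omega> \<in> space M. x < \<gamma>S * Y \<omega> * real nR * (real nR * lam * X1 \<omega> / (1 + real nR * lam * X1 \<omega>))}
      = {\<omega> \<in> space M. w < Y \<omega> * (c * X1 \<omega> / (1 + c * X1 \<omega>))}"
    using nR \<gamma>S by (auto simp: w_def c_def pos_divide_less_eq mult_ac)
  moreover have "emeasure M {\<omega> \<in> space M. w < Y \<omega> * (c * X1 \<omega> / (1 + c * X1 \<omega>))} = ennreal S"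
    unfolding S_def using nS by (intro emeasure_erlang_mult_saturation_greater Y X1 indep c w) simp_all
  moreover have "S \<ge> 0"
    unfolding S_def using w c by (intro sum_nonneg mult_nonneg_nonneg divide_nonneg_nonneg besselK_nonneg) simp_all
  ultimately have "prob {\<omega> \<in> space M. x < \<gamma>S * Y \<omega> * real nR * (real nR * lam * X1 \<omega> / (1 + real nR * lam * X1 \<omega>))} = S"
    by (simp add: emeasure_eq_measure)
  also have "S = 2 * (real nS * w) ^ nS * exp (- real nS * w) *
         (\<Sum>m<nS. (lam * real nS * real nR * w) powr (- (real m + 1) / 2) / (fact m * fact (nS - m - 1))
                   * besselK (real m + 1) (2 * sqrt (real nS * w / (lam * real nR))))"
  proof -
    have "0 < real nS"
      using nS by simp
    moreover have "c * real nS * w = lam * real nS * real nR * w" "w / c * real nS = real nS * w / (lam * real nR)"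
      by (simp_all add: c_def mult_ac)
    ultimately show ?thesis
      unfolding S_def by (simp only: erlang_bessel_sum_eq[OF _ c w])
  qed
  finally show ?thesis .
qed

theorem theorem1:
  fixes M :: "'a measure" and Y X1 :: "'a \<Rightarrow> real"
    and nS nR :: nat and \<gamma>S lam x :: real
  assumes "prob_space M"
    and "nS \<ge> 1" and "nR \<ge> 1" and "\<gamma>S > 0" and "lam > 0"
    and "distributed M lborel Y
           (\<lambda>y. ennreal (if y > 0 then real nS ^ nS / fact (nS - 1) * y ^ (nS - 1) * exp (- real nS * y) else 0))"
    and "distributed M lborel X1 (\<lambda>t. ennreal (if t > 0 then exp (- t) else 0))"
    and "prob_space.indep_var M borel Y borel X1"
    and "x > 0"
  shows "let V = (\<lambda>\<omega>. real nR * lam * X1 \<omega>);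
             \<gamma>D = (\<lambda>\<omega>. \<gamma>S * Y \<omega> * real nR * (V \<omega> / (1 + V \<omega>)));
             w = x / (real nR * \<gamma>S)
         in measure M {\<omega> \<in> space M. \<gamma>D \<omega> \<le> x} =
            1 - 2 * (real nS * w) ^ nS * exp (- real nS * w) *
              (\<Sum>m<nS. (lam * real nS * real nR * w) powr (- (real m + 1) / 2)
                         / (fact m * fact (nS - m - 1))
                         * besselK (real m + 1) (2 * sqrt (real nS * w / (lam * real nR))))"
proof -
  interpret prob_space M by fact
  let ?A = "{\<omega> \<in> space M. x < \<gamma>S * Y \<omega> * real nR * (real nR * lam * X1 \<omega> / (1 + real nR * lam * X1 \<omega>))}"
  have [measurable]: "Y \<in> borel_measurable M" "X1 \<in> borel_measurable M"
    using distributed_measurable[OF assms(6)] distributed_measurable[OF assms(7)] by simp_all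
  have "?A \<in> events"
    by measurable
  moreover have "{\<omega> \<in> space M. \<gamma>S * Y \<omega> * real nR * (real nR * lam * X1 \<omega> / (1 + real nR * lam * X1 \<omega>)) \<le> x}
      = space M - ?A"
    by auto
  ultimately show ?thesis
    unfolding Let_def using prob_compl prob_relay_snr_greater[OF assms(2-9)] by simp
qed

end
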